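(* Let $n\ge3$ and suppose $T=T_\lambda(r,m)$ acts linearly and inner faithfully on $\Bbbk\overline{Q}$ so that $g$ acts by a reflection: $g\cdot e_i=e_{n-(d+i)}$, $g\cdot a_i=\mu_ia^*_{n-(d+i+1)}$, $g\cdot a_i^*=\mu_i^*a_{n-(d+i+1)}$ for some integer $0<d\le n-1$ and $\mu_i,\mu_i^*\in\Bbbk^\times$. Let $\sigma$ be the quiver-Taft map. If $j$ is a vertex with $g\cdot j=j$ and $c_j,c_j^*\in\Bbbk$ satisfy $\sigma(a_j)=c_ja^*_{j-1}$ and $\sigma(a_j^* )=c_j^*a_j^*$, then $$c_j^2=\mu_j(\mu^*_{j-1})^{-1}\gamma_{j-1}^2,\qquad (c_j^* )^2=\mu_j^*\mu_{j-1}\gamma_{j-1}^2.$$ For every $i$ such that neither $i$ nor $i+1$ is fixed by $g$, $$\gamma_{i+1}^2=(\mu_i\mu^*_{n-(d+i+1)})\gamma_i^2=(\mu_i^*\mu_{n-(d+i+1)})^{-1}\gamma_i^2.$$ Consequently, either $\gamma_i=0$ for all $i$, or $\gamma_i\neq0$ for all $i$ with $g\cdot i\neq i$.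
   Context: Let $\Bbbk$ be a field, $r>1$ and $m$ positive integers with $r\mid m$, and $\lambda\in\Bbbk$ a primitive $r$-th root of unity, with $r$ coprime to the characteristic of $\Bbbk$. The generalized Taft algebra $T=T_\lambda(r,m)$ is the Hopf algebra generated by $g,x$ with relations $gx=\lambda xg$, $g^m=1$, $x^r=0$, $\Delta(g)=g\otimes g$, $\Delta(x)=1\otimes x+x\otimes g$, $\varepsilon(g)=1,\varepsilon(x)=0$, $S(g)=g^{-1}$, $S(x)=-xg^{-1}$. An action of $T$ on an algebra $A$ is a $T$-module algebra structure; so $g$ acts by an algebra automorphism and $x\cdot(ab)=a(x\cdot b)+(x\cdot a)(g\cdot b)$. It is inner faithful if no nonzero Hopf ideal $I$ of $T$ satisfies $I\cdot A=0$. Vertex indices are taken modulo $n$. $\overline{Q}$ has vertices $0,\dots,n-1$ and arrows $a_i:i\to i+1$, $a_i^*:i+1\to i$; in $\Bbbk\overline{Q}$, $e_i$ is the trivial path at $i$, $s(a),t(a)$ source and target, and $pq$ is concatenation ($p$ then $q$) if $t(p)=s(q)$, else $0$. A linear action: $g$ acts by a path-length-preserving automorphism ($g\cdot e_i=e_{g\cdot i}$) and $x$ maps vertices into the span of vertices and arrows into the span of vertices and arrows. Then there are scalars $\gamma_i$ with $x\cdot e_i=\gamma_ie_i-\gamma_i\lambda^{-1}e_{g\cdot i}$; the quiver-Taft map $\sigma$ is the linear map on the span of vertices and arrows with $\sigma(e_i)=0$ and $\sigma(a)=x\cdot a-\gamma_{t(a)}a+\gamma_{s(a)}\lambda^{-1}(g\cdot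 a)$ for arrows $a$. *)

theory Defs
  imports Main "HOL-Library.Function_Algebras"
begin

text \<open>Vertices are 0..n-1. Arr i is a_i : i -> i+1, ArrS i is a_i^* : i+1 -> i
  (indices modulo n). A path is a pair (start vertex, list of arrows); the trivial
  path e_v is (v, []). Concatenation is left-to-right (p then q).\<close>

datatype arr = Arr nat | ArrS nat

type_synonym path = "nat \<times> arr list"

fun aidx :: "arr \<Rightarrow> nat" where
  "aidx (Arr i) = i" | "aidx (ArrS i) = i"

fun asrc :: "nat \<Rightarrow> arr \<Rightarrow> nat" where
  "asrc n (Arr i) = i" | "asrc n (ArrS i) = (i + 1) mod n"

fun atgt :: "nat \<Rightarrow> arr \<Rightarrow> nat" where
  "atgt n (Arr i) = (i + 1) mod n" | "atgt n (ArrS i) = i"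

fun pend :: "nat \<Rightarrow> nat \<Rightarrow> arr list \<Rightarrow> nat" where
  "pend n v [] = v"
| "pend n v (a # as) = pend n (atgt n a) as"

fun pvalid :: "nat \<Rightarrow> nat \<Rightarrow> arr list \<Rightarrow> bool" where
  "pvalid n v [] = (v < n)"
| "pvalid n v (a # as) = (v < n \<and> aidx a < n \<and> asrc n a = v \<and> pvalid n (atgt n a) as)"

definition pq_carrier :: "nat \<Rightarrow> (path \<Rightarrow> 'k::field) set" where
  "pq_carrier n = {f. finite {p. f p \<noteq> 0} \<and> (\<forall>p. f p \<noteq> 0 \<longrightarrow> pvalid n (fst p) (snd p))}"

definition pq_mul :: "nat \<Rightarrow> (path \<Rightarrow> 'k::field) \<Rightarrow> (path \<Rightarrow> 'k) \<Rightarrow> (path \<Rightarrow> 'k)" where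
  "pq_mul n f h = (\<lambda>(v, as). \<Sum>k\<in>{0..length as}.
      f (v, take k as) * h (pend n v (take k as), drop k as))"

definition pq_one :: "nat \<Rightarrow> (path \<Rightarrow> 'k::field)" where
  "pq_one n = (\<lambda>(v, as). if as = [] \<and> v < n then 1 else 0)"

definition vtx :: "nat \<Rightarrow> (path \<Rightarrow> 'k::field)" where
  "vtx i = (\<lambda>p. if p = (i, []) then 1 else 0)"

definition arw :: "nat \<Rightarrow> arr \<Rightarrow> (path \<Rightarrow> 'k::field)" where
  "arw n a = (\<lambda>p. if p = (asrc n a, [a]) then 1 else 0)"

definition smul :: "'k::field \<Rightarrow> ('a \<Rightarrow> 'k) \<Rightarrow> ('a \<Rightarrow> 'k)" where
  "smul c f = (\<lambda>p. c * f p)"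

definition len_le :: "nat \<Rightarrow> (path \<Rightarrow> 'k::field) \<Rightarrow> bool" where
  "len_le l f \<longleftrightarrow> (\<forall>p. f p \<noteq> 0 \<longrightarrow> length (snd p) \<le> l)"

definition homog :: "nat \<Rightarrow> (path \<Rightarrow> 'k::field) \<Rightarrow> bool" where
  "homog l f \<longleftrightarrow> (\<forall>p. f p \<noteq> 0 \<longrightarrow> length (snd p) = l)"

definition lin_on :: "nat \<Rightarrow> ((path \<Rightarrow> 'k::field) \<Rightarrow> (path \<Rightarrow> 'k)) \<Rightarrow> bool" where
  "lin_on n F \<longleftrightarrow> (\<forall>f\<in>pq_carrier n. F f \<in> pq_carrier n)
     \<and> (\<forall>f\<in>pq_carrier n. \<forall>h\<in>pq_carrier n. F (f + h) = F f + F h)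
     \<and> (\<forall>c. \<forall>f\<in>pq_carrier n. F (smul c f) = smul c (F f))"

text \<open>A T_lambda(r,m)-module algebra structure on kQ is given by the actions G of g and
  X of x (T is presented by generators g, x and the relations gx = lambda xg, g^m = 1,
  x^r = 0); the module algebra axioms for the generators read
  g(ab) = g(a)g(b), g(1) = 1, x(ab) = a x(b) + x(a) g(b), x(1) = 0.\<close>
definition taft_module_algebra ::
  "nat \<Rightarrow> 'k::field \<Rightarrow> nat \<Rightarrow> nat \<Rightarrow> ((path \<Rightarrow> 'k) \<Rightarrow> (path \<Rightarrow> 'k))
     \<Rightarrow> ((path \<Rightarrow> 'k) \<Rightarrow> (path \<Rightarrow> 'k)) \<Rightarrow> bool" where
  "taft_module_algebra n lam r m G X \<longleftrightarrow>
     lin_on n G \<and> lin_on n X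
   \<and> (\<forall>f\<in>pq_carrier n. \<forall>h\<in>pq_carrier n. G (pq_mul n f h) = pq_mul n (G f) (G h))
   \<and> G (pq_one n) = pq_one n
   \<and> (\<forall>f\<in>pq_carrier n. \<forall>h\<in>pq_carrier n.
        X (pq_mul n f h) = pq_mul n f (X h) + pq_mul n (X f) (G h))
   \<and> X (pq_one n) = 0
   \<and> (\<forall>f\<in>pq_carrier n. G (X f) = smul lam (X (G f)))
   \<and> (\<forall>f\<in>pq_carrier n. (G ^^ m) f = f)
   \<and> (\<forall>f\<in>pq_carrier n. (X ^^ r) f = 0)"

definition linear_action ::
  "nat \<Rightarrow> ((path \<Rightarrow> 'k::field) \<Rightarrow> (path \<Rightarrow> 'k)) \<Rightarrow> ((path \<Rightarrow> 'k) \<Rightarrow> (path \<Rightarrow> 'k)) \<Rightarrow> bool" where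
  "linear_action n G X \<longleftrightarrow>
     (\<forall>f\<in>pq_carrier n. \<forall>l. homog l f \<longrightarrow> homog l (G f))
   \<and> (\<forall>i<n. \<exists>j<n. G (vtx i) = vtx j)
   \<and> (\<forall>i<n. len_le 0 (X (vtx i)))
   \<and> (\<forall>i<n. len_le 1 (X (arw n (Arr i))) \<and> len_le 1 (X (arw n (ArrS i))))"

text \<open>An element of T is the coefficient function of the basis g^a x^b, a<m, b<r.\<close>
type_synonym 'k taft = "nat \<times> nat \<Rightarrow> 'k"

definition tB :: "nat \<Rightarrow> nat \<Rightarrow> (nat \<times> nat) set" where
  "tB m r = {..<m} \<times> {..<r}"

definition tcar :: "nat \<Rightarrow> nat \<Rightarrow> ('k::field) taft set" where
  "tcar m r = {t. \<forall>p. p \<notin> tB m r \<longrightarrow> t p = 0}"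

text \<open>Structure constants: g^a1 x^b1 * g^a2 x^b2 = lambda^(-b1 a2) g^(a1+a2) x^(b1+b2).\<close>
fun tcoef :: "'k::field \<Rightarrow> nat \<Rightarrow> nat \<Rightarrow> nat \<times> nat \<Rightarrow> nat \<times> nat \<Rightarrow> nat \<times> nat \<Rightarrow> 'k" where
  "tcoef lam m r (a1, b1) (a2, b2) (a, b) =
     (if (a1 + a2) mod m = a \<and> b1 + b2 = b \<and> b < r then inverse lam ^ (b1 * a2) else 0)"

definition tmul :: "'k::field \<Rightarrow> nat \<Rightarrow> nat \<Rightarrow> 'k taft \<Rightarrow> 'k taft \<Rightarrow> 'k taft" where
  "tmul lam m r s t = (\<lambda>c. \<Sum>p\<in>tB m r. \<Sum>q\<in>tB m r. s p * t q * tcoef lam m r p q c)"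

definition tbas :: "nat \<times> nat \<Rightarrow> ('k::field) taft" where
  "tbas p = (\<lambda>q. if q = p then 1 else 0)"

definition tpow :: "'k::field \<Rightarrow> nat \<Rightarrow> nat \<Rightarrow> 'k taft \<Rightarrow> nat \<Rightarrow> 'k taft" where
  "tpow lam m r s k = (tmul lam m r s ^^ k) (tbas (0, 0))"

text \<open>T tensor T, with basis (g^a x^b) (x) (g^c x^e).\<close>
definition ttmul :: "'k::field \<Rightarrow> nat \<Rightarrow> nat \<Rightarrow> ((nat \<times> nat) \<times> (nat \<times> nat) \<Rightarrow> 'k)
    \<Rightarrow> ((nat \<times> nat) \<times> (nat \<times> nat) \<Rightarrow> 'k) \<Rightarrow> ((nat \<times> nat) \<times> (nat \<times> nat) \<Rightarrow> 'k)" where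
  "ttmul lam m r S U = (\<lambda>(c1, c2). \<Sum>P\<in>tB m r \<times> tB m r. \<Sum>Q\<in>tB m r \<times> tB m r.
      S P * U Q * tcoef lam m r (fst P) (fst Q) c1 * tcoef lam m r (snd P) (snd Q) c2)"

definition tten :: "('k::field) taft \<Rightarrow> 'k taft \<Rightarrow> ((nat \<times> nat) \<times> (nat \<times> nat) \<Rightarrow> 'k)" where
  "tten u v = (\<lambda>(p, q). u p * v q)"

definition ttpow :: "'k::field \<Rightarrow> nat \<Rightarrow> nat \<Rightarrow> ((nat \<times> nat) \<times> (nat \<times> nat) \<Rightarrow> 'k)
    \<Rightarrow> nat \<Rightarrow> ((nat \<times> nat) \<times> (nat \<times> nat) \<Rightarrow> 'k)" where
  "ttpow lam m r S k = (ttmul lam m r S ^^ k) (tten (tbas (0, 0)) (tbas (0, 0)))"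

text \<open>Comultiplication: Delta(g) = g (x) g, Delta(x) = 1 (x) x + x (x) g, extended
  multiplicatively: Delta(g^a x^b) = Delta(g)^a Delta(x)^b.\<close>
definition tcomul :: "'k::field \<Rightarrow> nat \<Rightarrow> nat \<Rightarrow> 'k taft \<Rightarrow> ((nat \<times> nat) \<times> (nat \<times> nat) \<Rightarrow> 'k)" where
  "tcomul lam m r t = (\<lambda>P. \<Sum>ab\<in>tB m r. t ab *
     ttmul lam m r
       (ttpow lam m r (tten (tbas (1 mod m, 0)) (tbas (1 mod m, 0))) (fst ab))
       (ttpow lam m r (tten (tbas (0, 0)) (tbas (0, 1)) + tten (tbas (0, 1)) (tbas (1 mod m, 0))) (snd ab))
       P)"

definition tcounit :: "nat \<Rightarrow> nat \<Rightarrow> ('k::field) taft \<Rightarrow> 'k" where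
  "tcounit m r t = (\<Sum>a<m. t (a, 0))"

text \<open>Antipode: S(g) = g^(-1) = g^(m-1), S(x) = - x g^(-1), S antimultiplicative:
  S(g^a x^b) = S(x)^b S(g)^a.\<close>
definition tanti :: "'k::field \<Rightarrow> nat \<Rightarrow> nat \<Rightarrow> 'k taft \<Rightarrow> 'k taft" where
  "tanti lam m r t = (\<lambda>c. \<Sum>ab\<in>tB m r. t ab *
     tmul lam m r
       (tpow lam m r (smul (-1) (tmul lam m r (tbas (0, 1)) (tbas ((m - 1) mod m, 0)))) (snd ab))
       (tpow lam m r (tbas ((m - 1) mod m, 0)) (fst ab)) c)"

definition tspan :: "nat \<Rightarrow> nat \<Rightarrow> ('k::field) taft set \<Rightarrow> ((nat \<times> nat) \<times> (nat \<times> nat) \<Rightarrow> 'k) set" where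
  "tspan m r I = {P. \<exists>xs. (\<forall>(u, v)\<in>set xs. (u \<in> I \<and> v \<in> tcar m r) \<or> (u \<in> tcar m r \<and> v \<in> I))
                        \<and> P = sum_list (map (\<lambda>(u, v). tten u v) xs)}"

definition hopf_ideal :: "'k::field \<Rightarrow> nat \<Rightarrow> nat \<Rightarrow> 'k taft set \<Rightarrow> bool" where
  "hopf_ideal lam m r I \<longleftrightarrow>
     I \<subseteq> tcar m r \<and> (\<lambda>_. 0) \<in> I
   \<and> (\<forall>s\<in>I. \<forall>t\<in>I. s + t \<in> I)
   \<and> (\<forall>c. \<forall>s\<in>I. smul c s \<in> I)
   \<and> (\<forall>s\<in>I. \<forall>t\<in>tcar m r. tmul lam m r s t \<in> I \<and> tmul lam m r t s \<in> I)
   \<and> (\<forall>s\<in>I. tcomul lam m r s \<in> tspan m r I)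
   \<and> (\<forall>s\<in>I. tcounit m r s = 0)
   \<and> (\<forall>s\<in>I. tanti lam m r s \<in> I)"

definition taft_act :: "nat \<Rightarrow> nat \<Rightarrow> ((path \<Rightarrow> 'k::field) \<Rightarrow> (path \<Rightarrow> 'k))
    \<Rightarrow> ((path \<Rightarrow> 'k) \<Rightarrow> (path \<Rightarrow> 'k)) \<Rightarrow> 'k taft \<Rightarrow> (path \<Rightarrow> 'k) \<Rightarrow> (path \<Rightarrow> 'k)" where
  "taft_act m r G X t f = (\<lambda>p. \<Sum>ab\<in>tB m r. t ab * (G ^^ fst ab) ((X ^^ snd ab) f) p)"

definition inner_faithful :: "nat \<Rightarrow> 'k::field \<Rightarrow> nat \<Rightarrow> nat
    \<Rightarrow> ((path \<Rightarrow> 'k) \<Rightarrow> (path \<Rightarrow> 'k)) \<Rightarrow> ((path \<Rightarrow> 'k) \<Rightarrow> (path \<Rightarrow> 'k)) \<Rightarrow> bool" where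
  "inner_faithful n lam r m G X \<longleftrightarrow>
     \<not> (\<exists>I. hopf_ideal lam m r I \<and> (\<exists>t\<in>I. t \<noteq> (\<lambda>_. 0))
            \<and> (\<forall>t\<in>I. \<forall>f\<in>pq_carrier n. taft_act m r G X t f = (\<lambda>_. 0)))"

definition rf :: "nat \<Rightarrow> nat \<Rightarrow> nat \<Rightarrow> nat" where
  "rf n d i = nat ((int n - int d - int i) mod int n)"

definition vpred :: "nat \<Rightarrow> nat \<Rightarrow> nat" where
  "vpred n j = (j + n - 1) mod n"

definition qsigma :: "nat \<Rightarrow> 'k::field \<Rightarrow> (nat \<Rightarrow> 'k) \<Rightarrow> ((path \<Rightarrow> 'k) \<Rightarrow> (path \<Rightarrow> 'k))
    \<Rightarrow> ((path \<Rightarrow> 'k) \<Rightarrow> (path \<Rightarrow> 'k)) \<Rightarrow> arr \<Rightarrow> (path \<Rightarrow> 'k)" where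
  "qsigma n lam \<gamma> G X a =
     X (arw n a) - smul (\<gamma> (atgt n a)) (arw n a) + smul (\<gamma> (asrc n a) * inverse lam) (G (arw n a))"

end

theory Submission
  imports Defs
begin

(* Commuting x with g on a vertex gives gamma_i = lambda gamma_(g i), so gamma vanishes at fixed
   vertices, and everywhere unless lambda = -1, in which case r = 2 and x^2 acts as 0.
   For an arrow a : s -> t with neither end fixed, the Leibniz rule applied to a = e_s a = a e_t
   forces x a = alpha e_s + gamma_t a - gamma_s lambda^-1 (g a), with g a a multiple of the
   reflected arrow a'.  Whenever x a = alpha e_v + e a + c a', comparing coefficients of a in
   g x a = lambda x g a and in x x a = 0 gives c^2 mu_a' = mu_a e^2 (if lambda^2 <> 1, then
   g^2 x = lambda^2 x g^2 forces e = c = 0 instead); both identities of the theorem are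
   instances of this.  Finally gamma_i = 0 propagates along the cycle: across a
   non-fixed vertex by the second identity, across a fixed vertex j by
   gamma_(j+1) = lambda gamma_(j-1). *)

lemma rf_less: "0 < n \<Longrightarrow> rf n d i < n"
  unfolding rf_def by (simp add: nat_less_iff)

lemma rf_eq_iff_dvd:
  assumes "0 < n" and "y < n"
  shows "y = rf n d i \<longleftrightarrow> int n dvd (int y + int d + int i)"
proof -
  have "y = rf n d i \<longleftrightarrow> int y mod int n = (int n - int d - int i) mod int n"
    unfolding rf_def using assms by auto
  also have "\<dots> \<longleftrightarrow> int n dvd (int y - (int n - int d - int i))"
    by (rule mod_eq_dvd_iff)
  also have "int y - (int n - int d - int i) = (int y + int d + int i) + (-1) * int n"
    by simp
  finally show ?thesis
    by (simp only: dvd_add_times_triv_right_iff)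
qed

lemma rf_dvd: "0 < n \<Longrightarrow> int n dvd (int (rf n d i) + int d + int i)"
  using rf_eq_iff_dvd rf_less by blast

lemma rf_rf: "0 < n \<Longrightarrow> i < n \<Longrightarrow> rf n d (rf n d i) = i"
  using rf_dvd[of n d i] rf_eq_iff_dvd[of n i d "rf n d i"] by (simp add: ac_simps)

lemma dvd_add_mod_iff: "(c::int) dvd a + b mod c \<longleftrightarrow> c dvd a + b"
  by (simp add: dvd_eq_mod_eq_0 mod_add_right_eq)

lemma rf_mod: "0 < n \<Longrightarrow> rf n d (i mod n) = rf n d i"
proof -
  assume n: "0 < n"
  have "int n dvd (int (rf n d i) + int d) + int (i mod n)"
    using rf_dvd[OF n, of d i] by (simp only: zmod_int dvd_add_mod_iff)
  then show ?thesis
    using rf_eq_iff_dvd[OF n rf_less[OF n, of d i], of d "i mod n"] by simp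
qed

lemma rf_succ: "0 < n \<Longrightarrow> (rf n d (i + 1) + 1) mod n = rf n d i"
proof -
  assume n: "0 < n"
  have "int n dvd (int d + int i) + int ((rf n d (i + 1) + 1) mod n)"
    using rf_dvd[OF n, of d "i + 1"] by (simp only: zmod_int dvd_add_mod_iff) (simp add: ac_simps)
  then show ?thesis
    using rf_eq_iff_dvd[of n "(rf n d (i + 1) + 1) mod n" d i] n by (simp add: ac_simps)
qed

lemma vpred_less: "0 < n \<Longrightarrow> vpred n j < n"
  unfolding vpred_def by simp

lemma vpred_succ_mod: "i < n \<Longrightarrow> vpred n ((i + 1) mod n) = i"
proof (cases "i + 1 = n")
  case False
  assume "i < n"
  with False have "(i + 1) mod n = i + 1" by simp
  then show ?thesis
    using \<open>i < n\<close> unfolding vpred_def by simp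
qed (simp add: vpred_def)

lemma succ_mod_inj:
  assumes "x < n" and "y < (n::nat)" and "(x + 1) mod n = (y + 1) mod n"
  shows "x = y"
proof -
  have "x = vpred n ((x + 1) mod n)"
    using vpred_succ_mod[OF assms(1)] by simp
  also have "\<dots> = y"
    unfolding assms(3) by (rule vpred_succ_mod[OF assms(2)])
  finally show ?thesis .
qed

lemma rf_succ_of_fixed:
  assumes "0 < n" and "rf n d j = j"
  shows "rf n d (j + 1) = vpred n j"
proof -
  have "rf n d (j + 1) = vpred n ((rf n d (j + 1) + 1) mod n)"
    using vpred_succ_mod[OF rf_less[OF assms(1)]] by simp
  then show ?thesis
    using rf_succ[OF assms(1), of d j] assms(2) by simp
qed

fun rf_arr :: "nat \<Rightarrow> nat \<Rightarrow> arr \<Rightarrow> arr" where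
  "rf_arr n d (Arr i) = ArrS (rf n d (i + 1))"
| "rf_arr n d (ArrS i) = Arr (rf n d (i + 1))"

lemma aidx_rf_arr_less: "0 < n \<Longrightarrow> aidx (rf_arr n d a) < n"
  by (cases a) (simp_all add: rf_less)

lemma asrc_rf_arr: "0 < n \<Longrightarrow> asrc n (rf_arr n d a) = rf n d (asrc n a)"
  using rf_succ[of n d] by (cases a) (simp_all add: rf_mod)

lemma rf_arr_neq: "rf_arr n d a \<noteq> a"
  by (cases a) simp_all

lemma rf_succ_rf_succ: "0 < n \<Longrightarrow> i < n \<Longrightarrow> rf n d (rf n d (i + 1) + 1) = i"
  by (metis rf_mod rf_rf rf_succ)

lemma rf_arr_rf_arr: "0 < n \<Longrightarrow> aidx a < n \<Longrightarrow> rf_arr n d (rf_arr n d a) = a"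
  using rf_succ_rf_succ[of n _ d] by (cases a) simp_all

lemma asrc_less: "0 < n \<Longrightarrow> aidx a < n \<Longrightarrow> asrc n a < n"
  by (cases a) simp_all

lemma atgt_less: "0 < n \<Longrightarrow> aidx a < n \<Longrightarrow> atgt n a < n"
  by (cases a) simp_all

lemma atgt_ne_rf_atgt:
  assumes n: "0 < n" and a: "aidx a < n" and b: "aidx b < n" and src: "asrc n b = asrc n a"
    and s: "rf n d (asrc n a) \<noteq> asrc n a" and t: "rf n d (atgt n a) \<noteq> atgt n a"
  shows "atgt n b \<noteq> rf n d (atgt n a)"
proof (cases a)
  case (Arr i)
  show ?thesis
  proof (cases b)
    case (ArrS x)
    show ?thesis
    proof
      assume "atgt n b = rf n d (atgt n a)"
      then have "x = rf n d (i + 1)" using Arr ArrS rf_mod[OF n] by simp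
      then have "rf n d i = (x + 1) mod n" using rf_succ[OF n, of d i] by simp
      also have "\<dots> = i" using src Arr ArrS by simp
      finally show False using s Arr by simp
    qed
  qed (use src t Arr in simp)
next
  case (ArrS i)
  show ?thesis
  proof (cases b)
    case (Arr x)
    let ?s = "(i + 1) mod n"
    show ?thesis
    proof
      assume "atgt n b = rf n d (atgt n a)"
      also have "rf n d (atgt n a) = (rf n d ?s + 1) mod n"
        using rf_succ[OF n, of d i] rf_mod[OF n] ArrS by simp
      finally have "(?s + 1) mod n = (rf n d ?s + 1) mod n"
        using src Arr ArrS by simp
      with n have "?s = rf n d ?s"
        by (intro succ_mod_inj[of ?s n "rf n d ?s"]) (simp_all add: rf_less)
      then show False using s ArrS by simp
    qed
  next
    case b_ArrS: (ArrS x)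
    then have "(x + 1) mod n = (i + 1) mod n" using src ArrS by simp
    with a b have "x = i" using ArrS b_ArrS by (intro succ_mod_inj[of x n i]) simp_all
    then show ?thesis using t ArrS b_ArrS by simp
  qed
qed

lemma smul_apply [simp]: "smul c f p = c * f p"
  by (simp add: smul_def)

lemma vtx_apply: "vtx i (v, as) = (if v = i \<and> as = [] then 1 else 0)"
  by (simp add: vtx_def)

lemma arw_apply: "arw n a (v, as) = (if v = asrc n a \<and> as = [a] then 1 else 0)"
  by (simp add: arw_def)

lemma pq_mul_vtx_left: "pq_mul n (vtx s) f (v, as) = (if v = s then f (v, as) else 0)"
proof -
  have "pq_mul n (vtx s) f (v, as) = vtx s (v, take 0 as) * f (pend n v (take 0 as), drop 0 as)"
    unfolding pq_mul_def by (simp add: sum.remove[of _ 0] sum.neutral vtx_apply)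
  then show ?thesis by (simp add: vtx_apply)
qed

lemma pq_mul_vtx_right: "pq_mul n f (vtx t) (v, as) = (if pend n v as = t then f (v, as) else 0)"
proof -
  have "pq_mul n f (vtx t) (v, as)
      = f (v, take (length as) as) * vtx t (pend n v (take (length as) as), drop (length as) as)"
    unfolding pq_mul_def by (simp add: sum.remove[of _ "length as"] sum.neutral vtx_apply)
  then show ?thesis by (simp add: vtx_apply)
qed

lemma pq_mul_diff_left: "pq_mul n (f - h) k = pq_mul n f k - pq_mul n h k"
  by (auto simp: pq_mul_def fun_eq_iff left_diff_distrib sum_subtractf)

lemma pq_mul_diff_right: "pq_mul n k (f - h) = pq_mul n k f - pq_mul n k h"
  by (auto simp: pq_mul_def fun_eq_iff right_diff_distrib sum_subtractf)

lemma pq_mul_smul_left: "pq_mul n (smul c f) k = smul c (pq_mul n f k)"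
  by (auto simp: pq_mul_def fun_eq_iff sum_distrib_left mult.assoc)

lemma pq_mul_smul_right: "pq_mul n k (smul c f) = smul c (pq_mul n k f)"
  by (auto simp: pq_mul_def fun_eq_iff sum_distrib_left mult.left_commute)

lemma pq_mul_vtx_arw: "pq_mul n (vtx (asrc n a)) (arw n a) = arw n a"
  by (auto simp: fun_eq_iff pq_mul_vtx_left arw_apply)

lemma pq_mul_arw_vtx: "pq_mul n (arw n a) (vtx (atgt n a)) = arw n a"
  by (auto simp: fun_eq_iff pq_mul_vtx_right arw_apply)

lemma pq_carrier_add: "f \<in> pq_carrier n \<Longrightarrow> h \<in> pq_carrier n \<Longrightarrow> f + h \<in> pq_carrier n"
proof -
  assume f: "f \<in> pq_carrier n" and h: "h \<in> pq_carrier n"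
  have "{p. (f + h) p \<noteq> 0} \<subseteq> {p. f p \<noteq> 0} \<union> {p. h p \<noteq> 0}"
    by auto
  with f h show ?thesis
    unfolding pq_carrier_def by (auto intro: finite_subset)
qed

lemma pq_carrier_smul: "f \<in> pq_carrier n \<Longrightarrow> smul c f \<in> pq_carrier n"
  unfolding pq_carrier_def by (auto intro: finite_subset[of _ "{p. f p \<noteq> 0}"])

lemma diff_eq_add_smul: "(f :: 'a \<Rightarrow> 'k::field) - h = f + smul (-1) h"
  by (simp add: fun_eq_iff)

lemma pq_carrier_diff: "f \<in> pq_carrier n \<Longrightarrow> h \<in> pq_carrier n \<Longrightarrow> f - h \<in> pq_carrier n"
  unfolding diff_eq_add_smul by (intro pq_carrier_add pq_carrier_smul)

lemma vtx_in_pq_carrier: "i < n \<Longrightarrow> vtx i \<in> pq_carrier n"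
  unfolding pq_carrier_def by (simp add: vtx_def)

lemma arw_in_pq_carrier: "0 < n \<Longrightarrow> aidx a < n \<Longrightarrow> arw n a \<in> pq_carrier n"
  unfolding pq_carrier_def arw_def by (cases a) auto

lemma lin_on_carrier: "lin_on n F \<Longrightarrow> f \<in> pq_carrier n \<Longrightarrow> F f \<in> pq_carrier n"
  by (simp add: lin_on_def)

lemma lin_on_add:
  "lin_on n F \<Longrightarrow> f \<in> pq_carrier n \<Longrightarrow> h \<in> pq_carrier n \<Longrightarrow> F (f + h) = F f + F h"
  by (simp add: lin_on_def)

lemma lin_on_smul: "lin_on n F \<Longrightarrow> f \<in> pq_carrier n \<Longrightarrow> F (smul c f) = smul c (F f)"
  by (simp add: lin_on_def)

lemma lin_on_diff:
  assumes "lin_on n F" and "f \<in> pq_carrier n" and "h \<in> pq_carrier n"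
  shows "F (f - h) = F f - F h"
proof -
  have "F (f - h) = F (f + smul (-1) h)"
    by (simp only: diff_eq_add_smul)
  also have "\<dots> = F f + smul (-1) (F h)"
    by (simp only: lin_on_add[OF assms(1,2) pq_carrier_smul[OF assms(3)]] lin_on_smul[OF assms(1,3)])
  finally show ?thesis
    by (simp only: diff_eq_add_smul)
qed

lemma pq_carrier_len_le_1_elim:
  assumes "f \<in> pq_carrier n" and "len_le 1 f" and "f (v, as) \<noteq> 0" and "as \<noteq> []"
  obtains b where "as = [b]" and "aidx b < n" and "asrc n b = v"
proof -
  from assms(2,3) have "length as \<le> 1"
    unfolding len_le_def by fastforce
  with assms(4) obtain b where "as = [b]"
    by (cases as) auto
  moreover from assms(1,3) have "pvalid n v as"
    unfolding pq_carrier_def by fastforce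
  ultimately show ?thesis
    using that by simp
qed

locale reflection_taft_action =
  fixes n :: nat and lam :: "'k::field" and r m d :: nat
    and G X :: "(path \<Rightarrow> 'k) \<Rightarrow> (path \<Rightarrow> 'k)"
    and \<gamma> \<mu> \<mu>s :: "nat \<Rightarrow> 'k"
  assumes n_pos: "0 < n"
    and r_gt: "r > 1" and lam_root: "lam ^ r = 1"
    and lam_prim: "\<forall>k. 0 < k \<and> k < r \<longrightarrow> lam ^ k \<noteq> 1"
    and mu_nz: "\<forall>i<n. \<mu> i \<noteq> 0 \<and> \<mu>s i \<noteq> 0"
    and act: "taft_module_algebra n lam r m G X"
    and lin: "linear_action n G X"
    and g_vtx: "\<forall>i<n. G (vtx i) = vtx (rf n d i)"
    and g_arr: "\<forall>i<n. G (arw n (Arr i)) = smul (\<mu> i) (arw n (ArrS (rf n d (i + 1))))"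
    and g_arrS: "\<forall>i<n. G (arw n (ArrS i)) = smul (\<mu>s i) (arw n (Arr (rf n d (i + 1))))"
    and gamma: "\<forall>i<n. X (vtx i) = smul (\<gamma> i) (vtx i) - smul (\<gamma> i * inverse lam) (vtx (rf n d i))"
begin

definition \<mu>_arr :: "arr \<Rightarrow> 'k" where
  "\<mu>_arr a = (case a of Arr i \<Rightarrow> \<mu> i | ArrS i \<Rightarrow> \<mu>s i)"

lemma \<mu>_arr_nonzero: "aidx a < n \<Longrightarrow> \<mu>_arr a \<noteq> 0"
  using mu_nz by (cases a) (simp_all add: \<mu>_arr_def)

lemma G_arw: "aidx a < n \<Longrightarrow> G (arw n a) = smul (\<mu>_arr a) (arw n (rf_arr n d a))"
  using g_arr g_arrS by (cases a) (simp_all add: \<mu>_arr_def)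

lemma G_arw_rf_arr:
  "aidx a < n \<Longrightarrow> G (arw n (rf_arr n d a)) = smul (\<mu>_arr (rf_arr n d a)) (arw n a)"
  using G_arw[OF aidx_rf_arr_less[OF n_pos]] rf_arr_rf_arr[OF n_pos] by simp

lemma G_vtx: "i < n \<Longrightarrow> G (vtx i) = vtx (rf n d i)"
  using g_vtx by simp

lemma X_vtx:
  "i < n \<Longrightarrow> X (vtx i) = smul (\<gamma> i) (vtx i) - smul (\<gamma> i * inverse lam) (vtx (rf n d i))"
  using gamma by simp

lemma G_lin: "lin_on n G"
  using act by (simp add: taft_module_algebra_def)

lemma X_lin: "lin_on n X"
  using act by (simp add: taft_module_algebra_def)

lemma G_X_comm: "f \<in> pq_carrier n \<Longrightarrow> G (X f) = smul lam (X (G f))"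
  using act by (simp add: taft_module_algebra_def)

lemma X_pq_mul:
  "f \<in> pq_carrier n \<Longrightarrow> h \<in> pq_carrier n \<Longrightarrow>
     X (pq_mul n f h) = pq_mul n f (X h) + pq_mul n (X f) (G h)"
  using act by (simp add: taft_module_algebra_def)

lemma X_arw_len_le_1: "aidx a < n \<Longrightarrow> len_le 1 (X (arw n a))"
  using lin by (cases a) (auto simp: linear_action_def)

lemma lam_nonzero: "lam \<noteq> 0"
  using lam_root r_gt by (cases "lam = 0") (simp_all add: power_0_left)

lemma lam_ne_1: "lam \<noteq> 1"
  using lam_prim r_gt by (metis power_one_right zero_less_one)

lemma lam_eq_minus_1: "lam ^ 2 = 1 \<Longrightarrow> lam = -1"
  using lam_ne_1 by (simp add: power2_eq_1_iff)

lemma X_X_eq_0: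
  assumes "lam ^ 2 = 1" and "f \<in> pq_carrier n"
  shows "X (X f) = 0"
proof -
  have "\<not> 2 < r"
    using lam_prim assms(1) by auto
  then have "r = 2"
    using r_gt by simp
  then show ?thesis
    using act assms(2) by (simp add: taft_module_algebra_def numeral_2_eq_2)
qed

lemmas pq_carrier_simps =
  pq_carrier_add pq_carrier_smul pq_carrier_diff vtx_in_pq_carrier arw_in_pq_carrier n_pos
  aidx_rf_arr_less rf_less

lemma gamma_rf:
  assumes i: "i < n"
  shows "\<gamma> i = lam * \<gamma> (rf n d i)"
proof -
  let ?j = "rf n d i"
  have j: "?j < n" and jj: "rf n d ?j = i"
    using rf_less[OF n_pos] rf_rf[OF n_pos i] by simp_all
  have "G (X (vtx i)) = smul lam (X (vtx ?j))"
    using G_X_comm i by (simp add: vtx_in_pq_carrier G_vtx)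
  moreover have "G (X (vtx i)) = smul (\<gamma> i) (vtx ?j) - smul (\<gamma> i * inverse lam) (vtx i)"
    using i j jj by (simp add: X_vtx G_vtx lin_on_diff[OF G_lin] lin_on_smul[OF G_lin] pq_carrier_simps)
  ultimately have "smul (\<gamma> i) (vtx ?j) - smul (\<gamma> i * inverse lam) (vtx i) = smul lam (X (vtx ?j))"
    by simp
  from fun_cong[OF this, of "(?j, [])"]
  have eq: "\<gamma> i - \<gamma> i * inverse lam * (if ?j = i then 1 else 0)
      = lam * (\<gamma> ?j - \<gamma> ?j * inverse lam * (if ?j = i then 1 else 0))"
    using j jj by (simp add: X_vtx vtx_apply)
  show ?thesis
  proof (cases "?j = i")
    case True
    with eq have "(1 - lam) * (1 - inverse lam) * \<gamma> i = 0"
      by (simp add: algebra_simps)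
    moreover have "1 - inverse lam \<noteq> 0"
      using lam_ne_1 by (metis inverse_1 inverse_inverse_eq right_minus_eq)
    ultimately show ?thesis
      using lam_ne_1 True by simp
  qed (use eq in simp)
qed

lemma gamma_fixed: "i < n \<Longrightarrow> rf n d i = i \<Longrightarrow> \<gamma> i = 0"
  using gamma_rf[of i] lam_ne_1 by (metis mult_cancel_right2)

lemma gamma_eq_0_of_lam_sq_ne_1:
  assumes "lam ^ 2 \<noteq> 1" and i: "i < n"
  shows "\<gamma> i = 0"
proof -
  have "\<gamma> i = lam ^ 2 * \<gamma> i"
    using gamma_rf[OF i] gamma_rf[OF rf_less[OF n_pos]] rf_rf[OF n_pos i]
    by (simp add: power2_eq_square)
  then show ?thesis
    using assms(1) by (metis mult_cancel_right2)
qed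

lemma gamma_rf_sq: "i < n \<Longrightarrow> \<gamma> (rf n d i) ^ 2 = \<gamma> i ^ 2"
  using gamma_rf[of i] gamma_eq_0_of_lam_sq_ne_1 rf_less[OF n_pos]
  by (cases "lam ^ 2 = 1") (simp_all add: power_mult_distrib)

lemma X_arw_apply_off_src:
  assumes a: "aidx a < n" and s: "rf n d (asrc n a) \<noteq> asrc n a" and v: "v \<noteq> asrc n a"
  shows "X (arw n a) (v, as) = - (\<gamma> (asrc n a) * inverse lam * G (arw n a) (v, as))"
proof -
  let ?s = "asrc n a" and ?B = "arw n a"
  have "X ?B = X (pq_mul n (vtx ?s) ?B)"
    by (simp only: pq_mul_vtx_arw)
  also have "\<dots> = pq_mul n (vtx ?s) (X ?B) + pq_mul n (X (vtx ?s)) (G ?B)"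
    using a by (simp add: X_pq_mul pq_carrier_simps asrc_less)
  finally have "X ?B (v, as) = (pq_mul n (vtx ?s) (X ?B) + pq_mul n (X (vtx ?s)) (G ?B)) (v, as)"
    by (rule fun_cong)
  also have "\<dots> = - (\<gamma> ?s * inverse lam * G ?B (v, as))"
    using a s v n_pos
    by (simp add: X_vtx asrc_less pq_mul_diff_left pq_mul_smul_left pq_mul_vtx_left G_arw arw_apply
        asrc_rf_arr)
  finally show ?thesis .
qed

lemma X_arw_apply_off_rf_tgt:
  assumes a: "aidx a < n" and t: "rf n d (atgt n a) \<noteq> atgt n a"
    and v: "pend n v as \<noteq> rf n d (atgt n a)"
  shows "X (arw n a) (v, as) = \<gamma> (atgt n a) * arw n a (v, as)"
proof -
  let ?t = "atgt n a" and ?B = "arw n a"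
  have "X ?B = X (pq_mul n ?B (vtx ?t))"
    by (simp only: pq_mul_arw_vtx)
  also have "\<dots> = pq_mul n ?B (X (vtx ?t)) + pq_mul n (X ?B) (vtx (rf n d ?t))"
    using a n_pos by (simp add: X_pq_mul pq_carrier_simps atgt_less G_vtx)
  finally have "X ?B (v, as) = (pq_mul n ?B (X (vtx ?t)) + pq_mul n (X ?B) (vtx (rf n d ?t))) (v, as)"
    by (rule fun_cong)
  also have "\<dots> = \<gamma> ?t * ?B (v, as)"
    using a t v n_pos
    by (simp add: X_vtx atgt_less pq_mul_diff_right pq_mul_smul_right pq_mul_vtx_right arw_apply)
  finally show ?thesis .
qed

lemma X_arw_eq:
  assumes a: "aidx a < n"
    and s: "rf n d (asrc n a) \<noteq> asrc n a" and t: "rf n d (atgt n a) \<noteq> atgt n a"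
  shows "X (arw n a) = smul (X (arw n a) (asrc n a, [])) (vtx (asrc n a))
           + smul (\<gamma> (atgt n a)) (arw n a) - smul (\<gamma> (asrc n a) * inverse lam) (G (arw n a))"
proof (rule ext, clarify)
  let ?s = "asrc n a" and ?t = "atgt n a" and ?B = "arw n a"
  fix v as
  have G_B: "G ?B (?s, as) = 0"
    using a s n_pos by (simp add: G_arw arw_apply asrc_rf_arr)
  have X_B_0: "X ?B (?s, as) = 0" if "as \<noteq> []" and "pend n ?s as = rf n d ?t"
  proof (rule ccontr)
    assume "X ?B (?s, as) \<noteq> 0"
    then obtain b where "as = [b]" "aidx b < n" "asrc n b = ?s"
      using pq_carrier_len_le_1_elim[OF lin_on_carrier[OF X_lin] X_arw_len_le_1[OF a]] \<open>as \<noteq> []\<close>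
        a n_pos by (metis arw_in_pq_carrier)
    then show False
      using atgt_ne_rf_atgt[OF n_pos a _ _ s t] that by simp
  qed
  show "X ?B (v, as) = (smul (X ?B (?s, [])) (vtx ?s) + smul (\<gamma> ?t) ?B
      - smul (\<gamma> ?s * inverse lam) (G ?B)) (v, as)"
  proof (cases "v = ?s")
    case False
    then show ?thesis
      using X_arw_apply_off_src[OF a s False] by (simp add: vtx_apply arw_apply)
  next
    case True
    then show ?thesis
      using X_arw_apply_off_rf_tgt[OF a t, of ?s as] X_B_0 G_B t
      by (cases "pend n ?s as = rf n d ?t") (auto simp: vtx_apply arw_apply)
  qed
qed

lemma X_arw_coeff_sq_of_lam_sq_eq_1:
  assumes lam: "lam ^ 2 = 1" and a: "aidx a < n" and v: "v < n"
    and X_A: "X (arw n a) = smul \<alpha> (vtx v) + smul e (arw n a) + smul c (arw n (rf_arr n d a))"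
  shows "c ^ 2 * \<mu>_arr (rf_arr n d a) = \<mu>_arr a * e ^ 2"
proof -
  let ?a' = "rf_arr n d a" and ?p = "(asrc n a, [a])"
  let ?A = "arw n a" and ?A' = "arw n ?a'" and ?m = "\<mu>_arr a" and ?m' = "\<mu>_arr ?a'"
  have a': "aidx ?a' < n"
    using n_pos by (rule aidx_rf_arr_less)
  have A_in: "?A \<in> pq_carrier n" and A'_in: "?A' \<in> pq_carrier n"
    using a a' n_pos by (simp_all add: arw_in_pq_carrier)
  have at_p: "?A ?p = 1" "?A' ?p = 0" "vtx w ?p = 0" for w
    using rf_arr_neq[of n d a] by (auto simp: arw_apply vtx_apply)
  have "G (X ?A) = smul lam (smul ?m (X ?A'))"
    using G_X_comm[OF A_in] G_arw[OF a] lin_on_smul[OF X_lin A'_in] by simp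
  from fun_cong[OF this, of ?p]
  have "c * ?m' = lam * ?m * X ?A' ?p"
    using v by (simp add: at_p X_A G_arw rf_arr_rf_arr[OF n_pos a] G_vtx
        lin_on_add[OF G_lin] lin_on_smul[OF G_lin] pq_carrier_simps a a')
  then have c_sq: "c ^ 2 * ?m' = lam * ?m * (c * X ?A' ?p)"
    by (simp add: power2_eq_square ac_simps)
  have "X (X ?A) ?p = 0"
    using X_X_eq_0[OF lam A_in] by simp
  then have "c * X ?A' ?p = - (e * e)"
    using v by (simp add: at_p X_A lin_on_add[OF X_lin] lin_on_smul[OF X_lin] pq_carrier_simps a a'
        X_vtx eq_neg_iff_add_eq_0 add.commute)
  with c_sq show ?thesis
    using lam_eq_minus_1[OF lam] by (simp add: power2_eq_square)
qed

lemma X_arw_coeffs_eq_0_of_lam_sq_ne_1: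
  assumes lam: "lam ^ 2 \<noteq> 1" and a: "aidx a < n" and v: "v < n"
    and X_A: "X (arw n a) = smul \<alpha> (vtx v) + smul e (arw n a) + smul c (arw n (rf_arr n d a))"
  shows "e = 0" and "c = 0"
proof -
  let ?a' = "rf_arr n d a"
  let ?p = "(asrc n a, [a])" and ?p' = "(asrc n ?a', [?a'])"
  let ?A = "arw n a" and ?A' = "arw n ?a'" and ?m = "\<mu>_arr a" and ?m' = "\<mu>_arr ?a'"
  have a': "aidx ?a' < n"
    using n_pos by (rule aidx_rf_arr_less)
  have A_in: "?A \<in> pq_carrier n" and A'_in: "?A' \<in> pq_carrier n"
    using a a' n_pos by (simp_all add: arw_in_pq_carrier)
  have at_p: "?A ?p = 1" "?A' ?p = 0" "?A ?p' = 0" "?A' ?p' = 1" "vtx w ?p = 0" "vtx w ?p' = 0" for w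
    using rf_arr_neq[of n d a] by (auto simp: arw_apply vtx_apply)
  have "G (G (X ?A)) = smul lam (smul ?m (smul lam (X (G ?A'))))"
    using G_X_comm[OF A_in] G_X_comm[OF A'_in] G_arw[OF a] lin_on_carrier[OF X_lin A'_in]
    by (simp add: lin_on_smul[OF X_lin] lin_on_smul[OF G_lin] lin_on_carrier[OF X_lin] pq_carrier_simps a')
  then have GG: "G (G (X ?A)) = smul (lam ^ 2 * ?m * ?m') (X ?A)"
    using G_arw_rf_arr[OF a] lin_on_smul[OF X_lin A_in] by (simp add: fun_eq_iff power2_eq_square ac_simps)
  have "e * ?m * ?m' = lam ^ 2 * ?m * ?m' * e" "c * ?m * ?m' = lam ^ 2 * ?m * ?m' * c"
    using fun_cong[OF GG, of ?p] fun_cong[OF GG, of ?p'] v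
    by (simp_all add: at_p X_A G_arw rf_arr_rf_arr[OF n_pos a] G_vtx
        lin_on_add[OF G_lin] lin_on_smul[OF G_lin] pq_carrier_simps a a' ac_simps)
  then show "e = 0" "c = 0"
    using lam \<mu>_arr_nonzero[OF a] \<mu>_arr_nonzero[OF a'] by auto
qed

lemma X_arw_coeff_sq:
  assumes a: "aidx a < n" and v: "v < n"
    and X_A: "X (arw n a) = smul \<alpha> (vtx v) + smul e (arw n a) + smul c (arw n (rf_arr n d a))"
  shows "c ^ 2 * \<mu>_arr (rf_arr n d a) = \<mu>_arr a * e ^ 2"
  using X_arw_coeff_sq_of_lam_sq_eq_1[OF _ assms] X_arw_coeffs_eq_0_of_lam_sq_ne_1[OF _ assms]
  by (cases "lam ^ 2 = 1") simp_all

lemma gamma_mult_inverse_lam: "i < n \<Longrightarrow> \<gamma> i * inverse lam = \<gamma> (rf n d i)"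
  using gamma_rf[of i] lam_nonzero by (simp add: field_simps)

lemma X_arw_eq_qsigma:
  "X (arw n a) = qsigma n lam \<gamma> G X a + smul (\<gamma> (atgt n a)) (arw n a)
     - smul (\<gamma> (asrc n a) * inverse lam) (G (arw n a))"
  by (simp add: qsigma_def fun_eq_iff)

lemma gamma_atgt_sq:
  assumes a: "aidx a < n"
    and s: "rf n d (asrc n a) \<noteq> asrc n a" and t: "rf n d (atgt n a) \<noteq> atgt n a"
  shows "\<gamma> (atgt n a) ^ 2 = \<mu>_arr a * \<mu>_arr (rf_arr n d a) * \<gamma> (asrc n a) ^ 2"
proof -
  let ?s = "asrc n a" and ?t = "atgt n a" and ?m = "\<mu>_arr a"
  have s_less: "?s < n"
    using n_pos a by (rule asrc_less)
  define \<alpha> where "\<alpha> = X (arw n a) (?s, [])"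
  have "X (arw n a) = smul \<alpha> (vtx ?s) + smul (\<gamma> ?t) (arw n a)
      + smul (- (\<gamma> (rf n d ?s) * ?m)) (arw n (rf_arr n d a))"
    using X_arw_eq[OF a s t, folded \<alpha>_def]
    by (simp add: G_arw[OF a] gamma_mult_inverse_lam[OF s_less] fun_eq_iff)
  from X_arw_coeff_sq[OF a s_less this]
  have "\<gamma> (rf n d ?s) ^ 2 * ?m ^ 2 * \<mu>_arr (rf_arr n d a) = ?m * \<gamma> ?t ^ 2"
    by (simp add: power_mult_distrib)
  then show ?thesis
    using \<mu>_arr_nonzero[OF a] gamma_rf_sq[OF s_less]
    by (simp add: power2_eq_square field_simps)
qed

lemma gamma_succ_sq:
  assumes i: "i < n"
    and fi: "rf n d i \<noteq> i" and fi1: "rf n d ((i + 1) mod n) \<noteq> (i + 1) mod n"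
  shows "\<gamma> ((i + 1) mod n) ^ 2 = (\<mu> i * \<mu>s (rf n d (i + 1))) * \<gamma> i ^ 2"
    and "\<gamma> ((i + 1) mod n) ^ 2 = inverse (\<mu>s i * \<mu> (rf n d (i + 1))) * \<gamma> i ^ 2"
proof -
  show "\<gamma> ((i + 1) mod n) ^ 2 = (\<mu> i * \<mu>s (rf n d (i + 1))) * \<gamma> i ^ 2"
    using gamma_atgt_sq[of "Arr i"] i fi fi1 by (simp add: \<mu>_arr_def)
  have "\<gamma> i ^ 2 = (\<mu>s i * \<mu> (rf n d (i + 1))) * \<gamma> ((i + 1) mod n) ^ 2"
    using gamma_atgt_sq[of "ArrS i"] i fi fi1 by (simp add: \<mu>_arr_def)
  moreover have "\<mu>s i * \<mu> (rf n d (i + 1)) \<noteq> 0"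
    using mu_nz i rf_less[OF n_pos] by simp
  ultimately show "\<gamma> ((i + 1) mod n) ^ 2 = inverse (\<mu>s i * \<mu> (rf n d (i + 1))) * \<gamma> i ^ 2"
    by (simp add: field_simps)
qed

lemma qsigma_Arr_coeff_sq_at_fixed:
  assumes j: "j < n" and fj: "rf n d j = j"
    and sigma: "qsigma n lam \<gamma> G X (Arr j) = smul c (arw n (ArrS (vpred n j)))"
  shows "c ^ 2 = \<mu> j * inverse (\<mu>s (vpred n j)) * \<gamma> (vpred n j) ^ 2"
proof -
  let ?v = "vpred n j" and ?t = "(j + 1) mod n"
  have rf_succ_j: "rf n d (j + 1) = ?v"
    using n_pos fj by (rule rf_succ_of_fixed)
  have "X (arw n (Arr j)) = smul 0 (vtx j) + smul (\<gamma> ?t) (arw n (Arr j))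
      + smul c (arw n (rf_arr n d (Arr j)))"
    using X_arw_eq_qsigma[of "Arr j"] sigma gamma_fixed[OF j fj] rf_succ_j by (simp add: fun_eq_iff)
  from X_arw_coeff_sq[OF _ j this]
  have "c ^ 2 * \<mu>s ?v = \<mu> j * \<gamma> ?v ^ 2"
    using j gamma_rf_sq[of ?t] rf_mod[OF n_pos] rf_succ_j by (simp add: \<mu>_arr_def)
  then show ?thesis
    using mu_nz vpred_less[OF n_pos] by (simp add: field_simps)
qed

lemma qsigma_ArrS_coeff_sq_at_fixed:
  assumes j: "j < n" and fj: "rf n d j = j"
    and sigma: "qsigma n lam \<gamma> G X (ArrS j) = smul cs (arw n (ArrS j))"
  shows "cs ^ 2 = \<mu>s j * \<mu> (vpred n j) * \<gamma> (vpred n j) ^ 2"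
proof -
  let ?v = "vpred n j" and ?t = "(j + 1) mod n"
  have rf_succ_j: "rf n d (j + 1) = ?v"
    using n_pos fj by (rule rf_succ_of_fixed)
  have "X (arw n (ArrS j)) = smul 0 (vtx j) + smul cs (arw n (ArrS j))
      + smul (- (\<gamma> ?v * \<mu>s j)) (arw n (rf_arr n d (ArrS j)))"
    using X_arw_eq_qsigma[of "ArrS j"] sigma gamma_fixed[OF j fj] rf_succ_j j
      gamma_mult_inverse_lam[of ?t] rf_mod[OF n_pos] n_pos
    by (simp add: G_arw \<mu>_arr_def fun_eq_iff)
  from X_arw_coeff_sq[OF _ j this]
  have "(\<gamma> ?v * \<mu>s j) ^ 2 * \<mu> ?v = \<mu>s j * cs ^ 2"
    using j rf_succ_j by (simp add: \<mu>_arr_def)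
  then show ?thesis
    using mu_nz j by (simp add: power2_eq_square field_simps)
qed

lemma gamma_succ_eq_0:
  assumes z: "z < n" and fz: "rf n d z \<noteq> z" and "\<gamma> z = 0"
  shows "\<gamma> ((z + 1) mod n) = 0"
proof (cases "rf n d ((z + 1) mod n) = (z + 1) mod n")
  case True
  then show ?thesis
    using n_pos by (simp add: gamma_fixed)
next
  case False
  then show ?thesis
    using gamma_succ_sq(1)[OF z fz False] \<open>\<gamma> z = 0\<close> by simp
qed

lemma gamma_succ_succ_eq_0:
  assumes y: "y < n" and "\<gamma> y = 0" and "\<gamma> ((y + 1) mod n) = 0"
  shows "\<gamma> (((y + 1) mod n + 1) mod n) = 0"
proof -
  let ?z = "(y + 1) mod n"
  have z: "?z < n"
    using n_pos by simp
  show ?thesis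
  proof (cases "rf n d ?z = ?z")
    case True
    have "rf n d ((?z + 1) mod n) = y"
      using rf_mod[OF n_pos] rf_succ_of_fixed[OF n_pos True] vpred_succ_mod[OF y] by simp
    then show ?thesis
      using gamma_rf[of "(?z + 1) mod n"] n_pos \<open>\<gamma> y = 0\<close> by simp
  next
    case False
    then show ?thesis
      using gamma_succ_eq_0[OF z] \<open>\<gamma> ?z = 0\<close> by simp
  qed
qed

lemma gamma_eq_0_or_nonzero: "(\<forall>i<n. \<gamma> i = 0) \<or> (\<forall>i<n. rf n d i \<noteq> i \<longrightarrow> \<gamma> i \<noteq> 0)"
proof (rule ccontr)
  assume "\<not> ?thesis"
  then obtain k i where k: "k < n" "rf n d k \<noteq> k" "\<gamma> k = 0" and i: "i < n" "\<gamma> i \<noteq> 0"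
    by blast
  have "\<gamma> ((k + l) mod n) = 0 \<and> \<gamma> ((k + l + 1) mod n) = 0" for l
  proof (induction l)
    case 0
    then show ?case
      using k gamma_succ_eq_0[OF k] by simp
  next
    case (Suc l)
    then show ?case
      using gamma_succ_succ_eq_0[of "(k + l) mod n"] n_pos by (simp add: mod_Suc_eq)
  qed
  moreover have "(k + (i + n - k)) mod n = i"
    using k(1) i(1) by simp
  ultimately show False
    using i(2) by metis
qed

end

theorem lemma3p12:
  fixes lam :: "'k::field" and r m n d :: nat
    and G X :: "(path \<Rightarrow> 'k) \<Rightarrow> (path \<Rightarrow> 'k)"
    and \<gamma> \<mu> \<mu>s :: "nat \<Rightarrow> 'k"
  assumes r_gt: "r > 1" and m_pos: "m > 0" and r_dvd: "r dvd m"
    and lam_root: "lam ^ r = 1" and lam_prim: "\<forall>k. 0 < k \<and> k < r \<longrightarrow> lam ^ k \<noteq> 1"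
    and r_char: "of_nat r \<noteq> (0::'k)"
    and n_ge: "n \<ge> 3" and d_pos: "0 < d" and d_le: "d \<le> n - 1"
    and mu_nz: "\<forall>i<n. \<mu> i \<noteq> 0 \<and> \<mu>s i \<noteq> 0"
    and act: "taft_module_algebra n lam r m G X"
    and lin: "linear_action n G X"
    and inf: "inner_faithful n lam r m G X"
    and g_vtx: "\<forall>i<n. G (vtx i) = vtx (rf n d i)"
    and g_arr: "\<forall>i<n. G (arw n (Arr i)) = smul (\<mu> i) (arw n (ArrS (rf n d (i + 1))))"
    and g_arrS: "\<forall>i<n. G (arw n (ArrS i)) = smul (\<mu>s i) (arw n (Arr (rf n d (i + 1))))"
    and gamma: "\<forall>i<n. X (vtx i) = smul (\<gamma> i) (vtx i) - smul (\<gamma> i * inverse lam) (vtx (rf n d i))"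
  shows
    "(\<forall>j<n. rf n d j = j \<longrightarrow> (\<forall>c cs.
        qsigma n lam \<gamma> G X (Arr j) = smul c (arw n (ArrS (vpred n j)))
        \<and> qsigma n lam \<gamma> G X (ArrS j) = smul cs (arw n (ArrS j))
        \<longrightarrow> c ^ 2 = \<mu> j * inverse (\<mu>s (vpred n j)) * \<gamma> (vpred n j) ^ 2
          \<and> cs ^ 2 = \<mu>s j * \<mu> (vpred n j) * \<gamma> (vpred n j) ^ 2))
   \<and> (\<forall>i<n. rf n d i \<noteq> i \<and> rf n d ((i + 1) mod n) \<noteq> (i + 1) mod n \<longrightarrow>
        \<gamma> ((i + 1) mod n) ^ 2 = (\<mu> i * \<mu>s (rf n d (i + 1))) * \<gamma> i ^ 2
        \<and> \<gamma> ((i + 1) mod n) ^ 2 = inverse (\<mu>s i * \<mu> (rf n d (i + 1))) * \<gamma> i ^ 2)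
   \<and> ((\<forall>i<n. \<gamma> i = 0) \<or> (\<forall>i<n. rf n d i \<noteq> i \<longrightarrow> \<gamma> i \<noteq> 0))"
proof -
  interpret reflection_taft_action n lam r m d G X \<gamma> \<mu> \<mu>s
    by unfold_locales (use assms in auto)
  show ?thesis
    using qsigma_Arr_coeff_sq_at_fixed qsigma_ArrS_coeff_sq_at_fixed gamma_succ_sq
      gamma_eq_0_or_nonzero by blast
qed

end
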